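(* Let $\Pi$ be an $n$-dimensional linear space satisfying the exchange axiom and the axiom (P2), let $0<k<n-1$, let $B=\{p_1,\dots,p_{n+1}\}$ be a base of $\Pi$, and let $\mathcal{B}_k$ be the base subset of $\mathcal{G}_k(\Pi)$ associated with $B$. A subset $\mathcal{R}\subset\mathcal{B}_k$ is exact if and only if $S_i(\mathcal{R})=\{p_i\}$ for every $i\in\{1,\dots,n+1\}$.
   Context: A linear space $\Pi=(P,\mathcal{L})$ is a set $P$ of points with a family $\mathcal{L}$ of proper subsets (lines) such that each line has at least two points and any two distinct points $p,q$ lie on exactly one line $pq$. A subspace is a set $S\subset P$ with $pq\subset S$ for all distinct $p,q\in S$; $\overline{X}$ is the smallest subspace containing $X$. A set $X$ is independent if $\overline{X}$ is not spanned by a proper subset of $X$; a base of $\Pi$ is an independent set spanning $P$. A subspace is $m$-dimensional if $m+1$ is the smallest number of points spanning it. Exchange axiom: for every $X\subset P$ and $p_1,p_2\in P\setminus\overline{X}$, $p_2\in\overline{X\cup\{p_1\}}$ implies $p_1\in\overline{X\cup\{p_2\}}$. Axiom (P2): every line has at least three points. $\mathcal{G}_k(\Pi)$ is the set of $k$-dimensional subspaces; the base subset of $\mathcal{G}_k(\Pi)$ associated with a base $B$ is the set of all $k$-dimensional subspaces spanned by points of $B$. A subset $\mathcal{R}\subset\mathcal{B}_k$ is exact if $\mathcal{B}_k$ is the unique base subset of $\mathcal{G}_k(\Pi)$ containing $\mathcal{R}$, and inexact otherwise. $S_i(\mathcal{R})$ denotes the intersection of all elements of $\mathcal{R}$ containing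 $p_i$ (the intersection of the empty family being $P$). *)

theory Defs
  imports Main
begin

definition linear_space :: "'p set \<Rightarrow> 'p set set \<Rightarrow> bool" where
  "linear_space P L \<longleftrightarrow>
     (\<forall>l\<in>L. l \<subseteq> P \<and> l \<noteq> P \<and> (\<exists>a b. a \<in> l \<and> b \<in> l \<and> a \<noteq> b)) \<and>
     (\<forall>p\<in>P. \<forall>q\<in>P. p \<noteq> q \<longrightarrow> (\<exists>!l. l \<in> L \<and> p \<in> l \<and> q \<in> l))"

definition line_through :: "'p set set \<Rightarrow> 'p \<Rightarrow> 'p \<Rightarrow> 'p set" where
  "line_through L p q = (THE l. l \<in> L \<and> p \<in> l \<and> q \<in> l)"

definition subspace :: "'p set \<Rightarrow> 'p set set \<Rightarrow> 'p set \<Rightarrow> bool" where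
  "subspace P L S \<longleftrightarrow> S \<subseteq> P \<and>
     (\<forall>p\<in>S. \<forall>q\<in>S. p \<noteq> q \<longrightarrow> line_through L p q \<subseteq> S)"

definition span_ls :: "'p set \<Rightarrow> 'p set set \<Rightarrow> 'p set \<Rightarrow> 'p set" where
  "span_ls P L X = P \<inter> \<Inter>{S. subspace P L S \<and> X \<subseteq> S}"

definition independent_ls :: "'p set \<Rightarrow> 'p set set \<Rightarrow> 'p set \<Rightarrow> bool" where
  "independent_ls P L X \<longleftrightarrow> X \<subseteq> P \<and> (\<forall>Y. Y \<subset> X \<longrightarrow> span_ls P L Y \<noteq> span_ls P L X)"

definition base_ls :: "'p set \<Rightarrow> 'p set set \<Rightarrow> 'p set \<Rightarrow> bool" where
  "base_ls P L B \<longleftrightarrow> independent_ls P L B \<and> span_ls P L B = P"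

definition has_dim :: "'p set \<Rightarrow> 'p set set \<Rightarrow> 'p set \<Rightarrow> nat \<Rightarrow> bool" where
  "has_dim P L S m \<longleftrightarrow> subspace P L S \<and>
     (\<exists>X. X \<subseteq> P \<and> finite X \<and> card X = m + 1 \<and> span_ls P L X = S) \<and>
     (\<forall>X. X \<subseteq> P \<and> finite X \<and> span_ls P L X = S \<longrightarrow> m + 1 \<le> card X)"

definition exchange_axiom :: "'p set \<Rightarrow> 'p set set \<Rightarrow> bool" where
  "exchange_axiom P L \<longleftrightarrow>
     (\<forall>X p1 p2. X \<subseteq> P \<longrightarrow> p1 \<in> P - span_ls P L X \<longrightarrow> p2 \<in> P - span_ls P L X \<longrightarrow>
        p2 \<in> span_ls P L (X \<union> {p1}) \<longrightarrow> p1 \<in> span_ls P L (X \<union> {p2}))"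

definition axiom_P2 :: "'p set set \<Rightarrow> bool" where
  "axiom_P2 L \<longleftrightarrow> (\<forall>l\<in>L. \<exists>a b c. a \<in> l \<and> b \<in> l \<and> c \<in> l \<and> a \<noteq> b \<and> a \<noteq> c \<and> b \<noteq> c)"

definition grass :: "'p set \<Rightarrow> 'p set set \<Rightarrow> nat \<Rightarrow> 'p set set" where
  "grass P L k = {S. has_dim P L S k}"

definition base_subset :: "'p set \<Rightarrow> 'p set set \<Rightarrow> nat \<Rightarrow> 'p set \<Rightarrow> 'p set set" where
  "base_subset P L k B = {S \<in> grass P L k. \<exists>X. X \<subseteq> B \<and> S = span_ls P L X}"

definition exact :: "'p set \<Rightarrow> 'p set set \<Rightarrow> nat \<Rightarrow> 'p set \<Rightarrow> 'p set set \<Rightarrow> bool" where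
  "exact P L k B R \<longleftrightarrow> R \<subseteq> base_subset P L k B \<and>
     (\<forall>B'. base_ls P L B' \<longrightarrow> R \<subseteq> base_subset P L k B' \<longrightarrow>
        base_subset P L k B' = base_subset P L k B)"

text \<open>S_i(R): intersection of all elements of R containing p (P if there are none).\<close>
definition S_of :: "'p set \<Rightarrow> 'p set set \<Rightarrow> 'p \<Rightarrow> 'p set" where
  "S_of P R p = P \<inter> \<Inter>{S \<in> R. p \<in> S}"

end

theory Submission
  imports Defs
begin

text \<open>By the exchange axiom, subspaces spanned by subsets of a base meet in the span of the
  common points, so \<open>S\<^sub>i(R)\<close> is spanned by the points of \<open>B\<close> lying in every element of \<open>R\<close>
  through \<open>p\<^sub>i\<close>. If such a point \<open>p\<^sub>j \<noteq> p\<^sub>i\<close> exists, replace \<open>p\<^sub>i\<close> by a third point \<open>r\<close> of the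
  line \<open>p\<^sub>i p\<^sub>j\<close>: every element of \<open>R\<close> is still spanned by points of the new base, whose base
  subset however contains subspaces through \<open>r\<close> not spanned by points of \<open>B\<close>; so \<open>R\<close> is
  inexact. Conversely, if \<open>S\<^sub>i(R) = {p\<^sub>i}\<close> for all \<open>i\<close> and \<open>R\<close> lies in the base subset of
  another base \<open>B'\<close>, the same description of \<open>S\<^sub>i(R)\<close> relative to \<open>B'\<close> forces \<open>p\<^sub>i \<in> B'\<close>,
  so \<open>B \<subseteq> B'\<close> and hence \<open>B' = B\<close>.\<close>

lemma span_ls_subset: "span_ls P L X \<subseteq> P"
  unfolding span_ls_def by blast

lemma span_ls_least: "subspace P L S \<Longrightarrow> X \<subseteq> S \<Longrightarrow> span_ls P L X \<subseteq> S"
  unfolding span_ls_def by blast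

lemma span_ls_superset: "X \<subseteq> P \<Longrightarrow> X \<subseteq> span_ls P L X"
  unfolding span_ls_def by blast

lemma span_ls_mono: "X \<subseteq> Y \<Longrightarrow> span_ls P L X \<subseteq> span_ls P L Y"
  unfolding span_ls_def by blast

lemma span_ls_empty: "span_ls P L {} = {}"
  using span_ls_least[of P L "{}" "{}"] by (simp add: subspace_def)

lemma span_ls_singleton: "p \<in> P \<Longrightarrow> span_ls P L {p} = {p}"
  using span_ls_least[of P L "{p}" "{p}"] span_ls_superset[of "{p}" P L]
  by (auto simp: subspace_def)

lemma subspace_line_through_subset:
  "subspace P L S \<Longrightarrow> p \<in> S \<Longrightarrow> q \<in> S \<Longrightarrow> p \<noteq> q \<Longrightarrow> line_through L p q \<subseteq> S"
  unfolding subspace_def by blast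

lemma finite_base_subset: "finite B \<Longrightarrow> finite (base_subset P L k B)"
  by (rule finite_surj[of "Pow B" _ "span_ls P L"]) (auto simp: base_subset_def)

lemma independent_ls_not_in_span_remove:
  assumes "independent_ls P L I" "x \<in> I"
  shows "x \<notin> span_ls P L (I - {x})"
proof
  assume "x \<in> span_ls P L (I - {x})"
  then have "I \<subseteq> span_ls P L (I - {x})"
    using assms span_ls_superset[of "I - {x}" P L] by (auto simp: independent_ls_def)
  then have "span_ls P L (I - {x}) = span_ls P L I"
    using span_ls_mono[of "I - {x}" I P L] unfolding span_ls_def by blast
  moreover have "I - {x} \<subset> I" using assms(2) by blast
  ultimately show False using assms(1) unfolding independent_ls_def by blast
qed

lemma independent_ls_mem_span:
  assumes "independent_ls P L I" "X \<subseteq> I" "x \<in> I" "x \<in> span_ls P L X"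
  shows "x \<in> X"
proof (rule ccontr)
  assume "x \<notin> X"
  then have "span_ls P L X \<subseteq> span_ls P L (I - {x})"
    using assms(2) by (intro span_ls_mono) blast
  then show False using independent_ls_not_in_span_remove[OF assms(1,3)] assms(4) by blast
qed

lemma independent_lsI:
  assumes "I \<subseteq> P" "\<And>x. x \<in> I \<Longrightarrow> x \<notin> span_ls P L (I - {x})"
  shows "independent_ls P L I"
  unfolding independent_ls_def
proof (intro conjI allI impI)
  fix Y assume "Y \<subset> I"
  then obtain x where x: "x \<in> I" "x \<notin> Y" by blast
  then have "span_ls P L Y \<subseteq> span_ls P L (I - {x})"
    using \<open>Y \<subset> I\<close> by (intro span_ls_mono) blast
  moreover have "x \<in> span_ls P L I" using span_ls_superset[OF assms(1)] x by blast
  ultimately show "span_ls P L Y \<noteq> span_ls P L I" using assms(2)[OF x(1)] by blast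
qed fact

lemma independent_ls_eq_if_spanning_subset:
  assumes "independent_ls P L I" "span_ls P L X = P" "X \<subseteq> I"
  shows "I = X"
proof (rule ccontr)
  assume "I \<noteq> X"
  then obtain x where x: "x \<in> I" "x \<notin> X" using assms(3) by blast
  have "I \<subseteq> P" using assms(1) by (simp add: independent_ls_def)
  then have "x \<in> span_ls P L X" using assms(2) x(1) by blast
  also have "\<dots> \<subseteq> span_ls P L (I - {x})" using assms(3) x by (intro span_ls_mono) blast
  finally show False using independent_ls_not_in_span_remove[OF assms(1) x(1)] by blast
qed

lemma axiom_P2_third_point:
  assumes "axiom_P2 L" "l \<in> L"
  obtains r where "r \<in> l" "r \<noteq> p" "r \<noteq> q"
  using assms unfolding axiom_P2_def by metis

lemma exchange_axiomD:
  assumes "exchange_axiom P L" "X \<subseteq> P" "p1 \<in> P" "p1 \<notin> span_ls P L X"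
    "p2 \<in> P" "p2 \<notin> span_ls P L X" "p2 \<in> span_ls P L (X \<union> {p1})"
  shows "p1 \<in> span_ls P L (X \<union> {p2})"
  using assms unfolding exchange_axiom_def by blast

context
  fixes P :: "'p set" and L :: "'p set set"
  assumes ls: "linear_space P L"
begin

lemma line_subset_points: "l \<in> L \<Longrightarrow> l \<subseteq> P"
  using ls unfolding linear_space_def by blast

lemma ex1_line:
  assumes "p \<in> P" "q \<in> P" "p \<noteq> q"
  shows "\<exists>!l. l \<in> L \<and> p \<in> l \<and> q \<in> l"
proof -
  have "\<forall>p\<in>P. \<forall>q\<in>P. p \<noteq> q \<longrightarrow> (\<exists>!l. l \<in> L \<and> p \<in> l \<and> q \<in> l)"
    using ls unfolding linear_space_def by (rule conjunct2)
  then show ?thesis using assms by blast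
qed

lemma line_through_props:
  assumes "p \<in> P" "q \<in> P" "p \<noteq> q"
  shows "line_through L p q \<in> L" "p \<in> line_through L p q" "q \<in> line_through L p q"
  using theI'[OF ex1_line[OF assms]] unfolding line_through_def by blast+

lemma line_through_eq:
  assumes "l \<in> L" "p \<in> l" "q \<in> l" "p \<noteq> q"
  shows "line_through L p q = l"
proof -
  have "p \<in> P" "q \<in> P" using assms line_subset_points by blast+
  from ex1_line[OF this assms(4)] show ?thesis
    unfolding line_through_def using assms by (intro the1_equality) blast+
qed

lemma subspace_span_ls: "subspace P L (span_ls P L X)"
  unfolding subspace_def
proof (intro conjI ballI impI)
  show "span_ls P L X \<subseteq> P" by (rule span_ls_subset)
next
  fix p q assume pq: "p \<in> span_ls P L X" "q \<in> span_ls P L X" "p \<noteq> q"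
  have "p \<in> P" "q \<in> P" using pq(1,2) span_ls_subset[of P L X] by (meson subsetD)+
  then have "line_through L p q \<subseteq> P"
    using line_through_props(1) line_subset_points pq(3) by blast
  moreover have "line_through L p q \<subseteq> S" if S: "subspace P L S" "X \<subseteq> S" for S
  proof -
    have "p \<in> S" "q \<in> S" using pq span_ls_least[OF S] by blast+
    then show ?thesis by (rule subspace_line_through_subset[OF S(1) _ _ pq(3)])
  qed
  ultimately show "line_through L p q \<subseteq> span_ls P L X"
    unfolding span_ls_def by blast
qed

lemma span_ls_subset_span_ls: "X \<subseteq> span_ls P L Y \<Longrightarrow> span_ls P L X \<subseteq> span_ls P L Y"
  by (rule span_ls_least[OF subspace_span_ls])

lemma line_subset_span_ls_pair:
  assumes "l \<in> L" "p \<in> l" "q \<in> l" "p \<noteq> q"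
  shows "l \<subseteq> span_ls P L {p, q}"
proof -
  have "{p, q} \<subseteq> P" using line_subset_points[OF assms(1)] assms(2,3) by blast
  from span_ls_superset[OF this, of L]
  have "p \<in> span_ls P L {p, q}" "q \<in> span_ls P L {p, q}" by simp_all
  then have "line_through L p q \<subseteq> span_ls P L {p, q}"
    by (rule subspace_line_through_subset[OF subspace_span_ls _ _ assms(4)])
  then show ?thesis using line_through_eq[OF assms] by simp
qed

lemma span_ls_finitary:
  assumes "X \<subseteq> P" "q \<in> span_ls P L X"
  obtains X0 where "X0 \<subseteq> X" "finite X0" "q \<in> span_ls P L X0"
proof -
  define U where "U = (\<Union>X0\<in>{X0. X0 \<subseteq> X \<and> finite X0}. span_ls P L X0)"
  have "subspace P L U" unfolding subspace_def
  proof (intro conjI ballI impI)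
    show "U \<subseteq> P" unfolding U_def using span_ls_subset[of P L] by blast
  next
    fix a b assume ab: "a \<in> U" "b \<in> U" "a \<noteq> b"
    then obtain X1 X2 where X12: "X1 \<subseteq> X" "finite X1" "a \<in> span_ls P L X1"
      "X2 \<subseteq> X" "finite X2" "b \<in> span_ls P L X2"
      unfolding U_def by blast
    then have "a \<in> span_ls P L (X1 \<union> X2)" "b \<in> span_ls P L (X1 \<union> X2)"
      using span_ls_mono[of X1 "X1 \<union> X2" P L] span_ls_mono[of X2 "X1 \<union> X2" P L] by blast+
    then have "line_through L a b \<subseteq> span_ls P L (X1 \<union> X2)"
      by (rule subspace_line_through_subset[OF subspace_span_ls _ _ ab(3)])
    also have "\<dots> \<subseteq> U"
      unfolding U_def by (rule UN_upper) (use X12 in simp)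
    finally show "line_through L a b \<subseteq> U" .
  qed
  moreover have "X \<subseteq> U"
  proof
    fix x assume "x \<in> X"
    then have "x \<in> span_ls P L {x}" using assms(1) span_ls_singleton[of x P L] by auto
    then show "x \<in> U" unfolding U_def using \<open>x \<in> X\<close> by blast
  qed
  ultimately have "span_ls P L X \<subseteq> U" by (rule span_ls_least)
  then show ?thesis using assms(2) that unfolding U_def by blast
qed

lemma span_ls_replace_on_line:
  assumes "X \<subseteq> P" "p \<in> X" "q \<in> X" "p \<noteq> q" "r \<in> line_through L p q" "r \<noteq> q"
  shows "span_ls P L (insert r (X - {p})) = span_ls P L X"
proof -
  have pP: "p \<in> P" and qP: "q \<in> P" using assms(1-3) by blast+
  note l = line_through_props[OF pP qP assms(4)]
  have rP: "r \<in> P" using line_subset_points[OF l(1)] assms(5) by blast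
  have "insert r (X - {p}) \<subseteq> span_ls P L X"
  proof -
    have "line_through L p q \<subseteq> span_ls P L {p, q}"
      by (rule line_subset_span_ls_pair[OF l assms(4)])
    also have "\<dots> \<subseteq> span_ls P L X" using assms(2,3) by (intro span_ls_mono) blast
    finally show ?thesis using assms(5) span_ls_superset[OF assms(1), of L] by blast
  qed
  moreover have "X \<subseteq> span_ls P L (insert r (X - {p}))"
  proof -
    have "line_through L p q \<subseteq> span_ls P L {r, q}"
      by (rule line_subset_span_ls_pair[OF l(1) assms(5) l(3) assms(6)])
    also have "\<dots> \<subseteq> span_ls P L (insert r (X - {p}))"
      using assms(3,4) by (intro span_ls_mono) blast
    finally show ?thesis
      using l(2) assms(1) rP span_ls_superset[of "insert r (X - {p})" P L] by blast
  qed
  ultimately show ?thesis using span_ls_subset_span_ls by blast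
qed

text \<open>A spanning set with fewer than \<open>k + 1\<close> points for \<open>span Y\<close>, together with \<open>I - Y\<close>,
  would span \<open>P\<close> with fewer than \<open>n + 1\<close> points.\<close>
lemma has_dim_span_ls_subset:
  assumes "has_dim P L P n" "I \<subseteq> P" "finite I" "span_ls P L I = P" "card I = n + 1"
    and "Y \<subseteq> I" "card Y = k + 1"
  shows "has_dim P L (span_ls P L Y) k"
  unfolding has_dim_def
proof (intro conjI exI allI impI)
  show "Y \<subseteq> P" "finite Y" using assms(2,3,6) finite_subset by blast+
next
  fix X assume X: "X \<subseteq> P \<and> finite X \<and> span_ls P L X = span_ls P L Y"
  define X' where "X' = X \<union> (I - Y)"
  have "Y \<subseteq> span_ls P L X'"
    using X assms(2,6) span_ls_superset[of Y P L] span_ls_mono[of X X' P L]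
    unfolding X'_def by blast
  moreover have "I - Y \<subseteq> span_ls P L X'"
    using X assms(2) span_ls_superset[of X' P L] unfolding X'_def by blast
  ultimately have "span_ls P L I \<subseteq> span_ls P L X'"
    by (intro span_ls_subset_span_ls) blast
  then have "span_ls P L X' = P" using assms(4) span_ls_subset[of P L X'] by blast
  moreover have "X' \<subseteq> P" "finite X'" using X assms(2,3) unfolding X'_def by auto
  ultimately have "n + 1 \<le> card X'" using assms(1) unfolding has_dim_def by blast
  moreover have "card X' \<le> card X + card (I - Y)" unfolding X'_def by (rule card_Un_le)
  moreover have "card (I - Y) = card I - card Y"
    using assms(3,6) by (meson card_Diff_subset finite_subset)
  moreover have "card Y \<le> card I" using assms(3,6) by (intro card_mono)
  ultimately show "k + 1 \<le> card X" using assms(5,7) by linarith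
qed (use assms(7) subspace_span_ls in auto)

lemma line_point_not_in_span_remove:
  assumes I: "independent_ls P L I" and "p \<in> I" "q \<in> I" "p \<noteq> q"
    and r: "r \<in> line_through L p q" "r \<noteq> q"
  shows "r \<notin> span_ls P L (I - {p})"
proof
  assume r_in: "r \<in> span_ls P L (I - {p})"
  have IP: "I \<subseteq> P" using I unfolding independent_ls_def by blast
  have pq: "p \<in> P" "q \<in> P" using IP assms(2,3) by blast+
  note l = line_through_props[OF pq assms(4)]
  have "q \<in> span_ls P L (I - {p})"
    using IP assms(3,4) span_ls_superset[of "I - {p}" P L] by blast
  with r_in have "span_ls P L {r, q} \<subseteq> span_ls P L (I - {p})"
    by (intro span_ls_subset_span_ls) blast
  moreover have "p \<in> span_ls P L {r, q}"
    using line_subset_span_ls_pair[OF l(1) r(1) l(3) r(2)] l(2) by blast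
  ultimately show False using independent_ls_not_in_span_remove[OF I assms(2)] by blast
qed

lemma base_subset_replace_on_line:
  assumes I: "independent_ls P L I" and S: "S \<in> base_subset P L k I"
    and "p \<in> I" "q \<in> I" "p \<noteq> q" "r \<in> line_through L p q" "r \<noteq> q"
    and "p \<in> S \<Longrightarrow> q \<in> S"
  shows "S \<in> base_subset P L k (insert r (I - {p}))"
proof -
  obtain X where X: "X \<subseteq> I" "S = span_ls P L X" and "S \<in> grass P L k"
    using S unfolding base_subset_def by blast
  have XP: "X \<subseteq> P" using I X(1) unfolding independent_ls_def by blast
  show ?thesis
  proof (cases "p \<in> X")
    case False
    then have "X \<subseteq> insert r (I - {p})" using X(1) by blast
    then show ?thesis using S X(2) unfolding base_subset_def by blast
  next
    case True
    then have "q \<in> S" using assms(8) X(2) span_ls_superset[OF XP, of L] by blast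
    then have "q \<in> X" using independent_ls_mem_span[OF I X(1) assms(4)] X(2) by blast
    then have "S = span_ls P L (insert r (X - {p}))"
      using span_ls_replace_on_line[OF XP True _ assms(5-7)] X(2) by simp
    moreover have "insert r (X - {p}) \<subseteq> insert r (I - {p})" using X(1) by blast
    ultimately show ?thesis using S unfolding base_subset_def by blast
  qed
qed

end

context
  fixes P :: "'p set" and L :: "'p set set"
  assumes ls: "linear_space P L" and ex: "exchange_axiom P L"
begin

text \<open>Induction on \<open>D\<close>: if adding \<open>x \<in> D\<close> captured a new point \<open>q \<in> span Y\<close>, exchange
  would put \<open>x\<close> into \<open>span (A \<union> D \<union> {q}) \<subseteq> span (I - {x})\<close>.\<close>
lemma span_ls_Un_disjoint_Int_subset:
  assumes I: "independent_ls P L I" and "finite D" "D \<subseteq> I" "D \<inter> Y = {}" "A \<subseteq> Y" "Y \<subseteq> I"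
  shows "span_ls P L (A \<union> D) \<inter> span_ls P L Y \<subseteq> span_ls P L A"
  using assms(2-4)
proof (induction D rule: finite_induct)
  case (insert x D)
  have IP: "I \<subseteq> P" using I unfolding independent_ls_def by blast
  have x: "x \<in> I" "x \<notin> Y" and D: "D \<subseteq> I" "D \<inter> Y = {}" using insert.prems by auto
  show ?case
  proof
    fix q assume q: "q \<in> span_ls P L (A \<union> insert x D) \<inter> span_ls P L Y"
    show "q \<in> span_ls P L A"
    proof (rule ccontr)
      assume "q \<notin> span_ls P L A"
      then have q_notin: "q \<notin> span_ls P L (A \<union> D)" using insert.IH[OF D] q by blast
      have AD: "A \<union> D \<subseteq> I - {x}" using insert.hyps(2) x assms(5,6) D by blast
      then have x_notin: "x \<notin> span_ls P L (A \<union> D)"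
        using independent_ls_not_in_span_remove[OF I x(1)] span_ls_mono[of "A \<union> D" "I - {x}" P L]
        by blast
      have "q \<in> span_ls P L (A \<union> D \<union> {x})" using q by simp
      then have "x \<in> span_ls P L (A \<union> D \<union> {q})"
        using exchange_axiomD[OF ex _ _ x_notin _ q_notin] AD IP x(1) span_ls_subset[of P L] q
        by blast
      moreover have "q \<in> span_ls P L (I - {x})"
        using q x assms(6) span_ls_mono[of Y "I - {x}" P L] by blast
      then have "A \<union> D \<union> {q} \<subseteq> span_ls P L (I - {x})"
        using AD IP span_ls_superset[of "I - {x}" P L] by blast
      ultimately have "x \<in> span_ls P L (I - {x})"
        using span_ls_subset_span_ls[OF ls] by blast
      then show False using independent_ls_not_in_span_remove[OF I x(1)] by blast
    qed
  qed
qed simp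

lemma span_ls_Int:
  assumes I: "independent_ls P L I" and "X \<subseteq> I" "Y \<subseteq> I"
  shows "span_ls P L X \<inter> span_ls P L Y = span_ls P L (X \<inter> Y)"
proof
  show "span_ls P L (X \<inter> Y) \<subseteq> span_ls P L X \<inter> span_ls P L Y"
    using span_ls_mono[of "X \<inter> Y" X P L] span_ls_mono[of "X \<inter> Y" Y P L] by blast
  show "span_ls P L X \<inter> span_ls P L Y \<subseteq> span_ls P L (X \<inter> Y)"
  proof
    fix q assume q: "q \<in> span_ls P L X \<inter> span_ls P L Y"
    have "X \<subseteq> P" using I assms(2) unfolding independent_ls_def by blast
    then obtain X0 where X0: "X0 \<subseteq> X" "finite X0" "q \<in> span_ls P L X0"
      using span_ls_finitary[OF ls] q by blast
    have "span_ls P L ((X0 \<inter> Y) \<union> (X0 - Y)) \<inter> span_ls P L Y \<subseteq> span_ls P L (X0 \<inter> Y)"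
      by (rule span_ls_Un_disjoint_Int_subset[OF I]) (use X0 assms in blast)+
    moreover have "(X0 \<inter> Y) \<union> (X0 - Y) = X0" by blast
    ultimately have "q \<in> span_ls P L (X0 \<inter> Y)" using q X0 by auto
    then show "q \<in> span_ls P L (X \<inter> Y)"
      using span_ls_mono[of "X0 \<inter> Y" "X \<inter> Y" P L] X0 by blast
  qed
qed

lemma mem_if_line_point_in_span_ls:
  assumes I: "independent_ls P L I" and "W \<subseteq> I" "p \<in> I" "q \<in> I" "p \<noteq> q"
    and r: "r \<in> line_through L p q" "r \<noteq> p" "r \<in> span_ls P L W"
  shows "q \<in> W"
proof (rule ccontr)
  assume "q \<notin> W"
  have "p \<in> P" "q \<in> P" using I assms(3,4) unfolding independent_ls_def by blast+
  note l = line_through_props[OF ls this assms(5)]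
  have "r \<in> span_ls P L W \<inter> span_ls P L {p, q}"
    using r(1,3) line_subset_span_ls_pair[OF ls l assms(5)] by blast
  then have "r \<in> span_ls P L (W \<inter> {p, q})"
    using span_ls_Int[OF I assms(2), of "{p, q}"] assms(3,4) by blast
  also have "\<dots> \<subseteq> span_ls P L {p}" using \<open>q \<notin> W\<close> by (intro span_ls_mono) blast
  finally show False using span_ls_singleton[OF \<open>p \<in> P\<close>] r(2) by blast
qed

lemma Inter_span_ls_subsets_base:
  assumes I: "independent_ls P L I" and "span_ls P L I = P" and "finite F"
    and "\<forall>S\<in>F. \<exists>X\<subseteq>I. S = span_ls P L X"
  shows "P \<inter> \<Inter>F = span_ls P L {x\<in>I. \<forall>S\<in>F. x \<in> S}"
  using assms(3,4)
proof (induction F rule: finite_induct)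
  case empty
  then show ?case using assms(2) by simp
next
  case (insert S F)
  obtain X where X: "X \<subseteq> I" "S = span_ls P L X" using insert.prems by auto
  define Z where "Z = {x\<in>I. \<forall>S\<in>F. x \<in> S}"
  have IP: "I \<subseteq> P" using I unfolding independent_ls_def by blast
  have X_eq: "X = {x\<in>I. x \<in> S}"
    using X IP independent_ls_mem_span[OF I X(1)] span_ls_superset[of X P L] by blast
  have "P \<inter> \<Inter>(insert S F) = S \<inter> (P \<inter> \<Inter>F)" using X(2) span_ls_subset[of P L X] by blast
  also have "\<dots> = span_ls P L X \<inter> span_ls P L Z" using insert X(2) by (simp add: Z_def)
  also have "\<dots> = span_ls P L (X \<inter> Z)" by (rule span_ls_Int[OF I X(1)]) (simp add: Z_def)
  also have "X \<inter> Z = {x\<in>I. \<forall>S'\<in>insert S F. x \<in> S'}" unfolding Z_def using X_eq by blast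
  finally show ?case .
qed

lemma S_of_base_subset:
  assumes "base_ls P L B" "finite R" "R \<subseteq> base_subset P L k B"
  shows "S_of P R p = span_ls P L {x\<in>B. \<forall>S\<in>R. p \<in> S \<longrightarrow> x \<in> S}"
proof -
  have "P \<inter> \<Inter>{S \<in> R. p \<in> S} = span_ls P L {x\<in>B. \<forall>S\<in>{S \<in> R. p \<in> S}. x \<in> S}"
    using assms unfolding base_ls_def base_subset_def
    by (intro Inter_span_ls_subsets_base) auto
  also have "{x\<in>B. \<forall>S\<in>{S \<in> R. p \<in> S}. x \<in> S} = {x\<in>B. \<forall>S\<in>R. p \<in> S \<longrightarrow> x \<in> S}"
    by blast
  finally show ?thesis unfolding S_of_def .
qed

lemma independent_ls_exchange:
  assumes BI: "independent_ls P L B" and "p \<in> B" "r \<in> P"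
    and r_notin: "r \<notin> span_ls P L (B - {p})"
  shows "independent_ls P L (insert r (B - {p}))"
proof (rule independent_lsI)
  have BP: "B \<subseteq> P" using BI unfolding independent_ls_def by blast
  then show "insert r (B - {p}) \<subseteq> P" using assms(3) by blast
  fix x assume x: "x \<in> insert r (B - {p})"
  show "x \<notin> span_ls P L (insert r (B - {p}) - {x})"
  proof (cases "x = r")
    case True
    have "r \<notin> B - {p}" using r_notin BP span_ls_superset[of "B - {p}" P L] by blast
    then show ?thesis using r_notin True by (simp add: insert_Diff_if)
  next
    case False
    define X where "X = B - {p, x}"
    have xB: "x \<in> B" "x \<noteq> p" using x False by auto
    have XP: "X \<subseteq> P" unfolding X_def using BP by blast
    have "span_ls P L X \<subseteq> span_ls P L (B - {x})" "span_ls P L X \<subseteq> span_ls P L (B - {p})"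
      unfolding X_def by (intro span_ls_mono; blast)+
    then have x_notin: "x \<notin> span_ls P L X" and r_notin_X: "r \<notin> span_ls P L X"
      using independent_ls_not_in_span_remove[OF BI xB(1)] r_notin by blast+
    have eq: "insert r (B - {p}) - {x} = X \<union> {r}" "X \<union> {x} = B - {p}"
      unfolding X_def using False xB by auto
    show ?thesis
    proof
      assume "x \<in> span_ls P L (insert r (B - {p}) - {x})"
      then have "x \<in> span_ls P L (X \<union> {r})" by (simp only: eq(1))
      from exchange_axiomD[OF ex XP assms(3) r_notin_X _ x_notin this]
      have "r \<in> span_ls P L (X \<union> {x})" using xB(1) BP by blast
      then show False using r_notin eq(2) by simp
    qed
  qed
qed

lemma base_ls_exchange:
  assumes B: "base_ls P L B" and "p \<in> B" "r \<in> P" and r_notin: "r \<notin> span_ls P L (B - {p})"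
  shows "base_ls P L (insert r (B - {p}))"
proof -
  have BI: "independent_ls P L B" and "span_ls P L B = P"
    using B unfolding base_ls_def by auto
  have BP: "B \<subseteq> P" using BI unfolding independent_ls_def by blast
  have p_notin: "p \<notin> span_ls P L (B - {p})"
    by (rule independent_ls_not_in_span_remove[OF BI assms(2)])
  have "B - {p} \<union> {p} = B" using assms(2) by blast
  then have "r \<in> span_ls P L (B - {p} \<union> {p})" using assms(3) \<open>span_ls P L B = P\<close> by simp
  moreover have "B - {p} \<subseteq> P" "p \<in> P" using BP assms(2) by auto
  ultimately have "p \<in> span_ls P L (insert r (B - {p}))"
    using exchange_axiomD[OF ex _ _ p_notin assms(3) r_notin] by simp
  moreover have "B - {p} \<subseteq> span_ls P L (insert r (B - {p}))"
    using BP assms(3) span_ls_superset[of "insert r (B - {p})" P L] by blast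
  ultimately have "B \<subseteq> span_ls P L (insert r (B - {p}))" by blast
  from span_ls_subset_span_ls[OF ls this]
  have "span_ls P L (insert r (B - {p})) = P"
    using \<open>span_ls P L B = P\<close> span_ls_subset[of P L "insert r (B - {p})"] by blast
  with independent_ls_exchange[OF BI assms(2-4)] show ?thesis unfolding base_ls_def by blast
qed

text \<open>The witness is spanned by \<open>r\<close> and \<open>k\<close> points of \<open>B - {p, q}\<close>; a spanning set
  inside \<open>B\<close> would have to contain \<open>q\<close>, which is independent of \<open>r\<close> and those points.\<close>
lemma base_subset_replace_on_line_ne:
  assumes "has_dim P L P n" "base_ls P L B" "finite B" "card B = n + 1" "k \<le> n - 1"
    and "p \<in> B" "q \<in> B" "p \<noteq> q" and r: "r \<in> line_through L p q" "r \<noteq> p" "r \<noteq> q"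
    and B': "base_ls P L (insert r (B - {p}))"
  shows "base_subset P L k (insert r (B - {p})) \<noteq> base_subset P L k B"
proof
  define B' where "B' = insert r (B - {p})"
  have BI: "independent_ls P L B" using assms(2) unfolding base_ls_def by blast
  then have "r \<notin> span_ls P L (B - {p})"
    by (rule line_point_not_in_span_remove[OF ls _ assms(6-8) r(1,3)])
  then have "r \<notin> B - {p}" using BI span_ls_superset[of "B - {p}" P L]
    unfolding independent_ls_def by blast
  have B'I: "independent_ls P L B'" and "span_ls P L B' = P"
    using B' unfolding B'_def base_ls_def by auto
  then have B'P: "B' \<subseteq> P" unfolding independent_ls_def by blast
  have "card B' = n + 1"
    unfolding B'_def using assms(3,4,6) \<open>r \<notin> B - {p}\<close> by (simp add: card_Diff_singleton)
  obtain Z where Z: "Z \<subseteq> B - {p, q}" "card Z = k"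
    using obtain_subset_with_card_n[of k "B - {p, q}"] assms(3-8) by (auto simp: card_Diff_subset)
  have "finite Z" using Z(1) assms(3) finite_subset by blast
  have ZB': "insert r Z \<subseteq> B'" and "r \<notin> Z" using Z(1) \<open>r \<notin> B - {p}\<close> unfolding B'_def by blast+
  define T where "T = span_ls P L (insert r Z)"
  have "has_dim P L T k"
    unfolding T_def using assms(1) B'P \<open>span_ls P L B' = P\<close> \<open>card B' = n + 1\<close> ZB' Z(2)
      \<open>finite Z\<close> \<open>r \<notin> Z\<close> assms(3)
    by (intro has_dim_span_ls_subset[OF ls, of n B']) (auto simp: B'_def)
  then have "T \<in> base_subset P L k B'"
    unfolding base_subset_def grass_def T_def using ZB' by blast
  moreover assume "base_subset P L k B' = base_subset P L k B"
  ultimately obtain W where W: "W \<subseteq> B" "T = span_ls P L W"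
    unfolding base_subset_def by auto
  have "r \<in> T" unfolding T_def using ZB' B'P span_ls_superset[of "insert r Z" P L] by blast
  then have "q \<in> W" using mem_if_line_point_in_span_ls[OF BI W(1) assms(6-8) r(1,2)] W(2) by blast
  then have "q \<in> span_ls P L (insert r Z)"
    using W BI span_ls_superset[of W P L] unfolding T_def independent_ls_def by blast
  moreover have "span_ls P L (insert r Z) \<subseteq> span_ls P L (B' - {q})"
    using ZB' Z(1) r(3) by (intro span_ls_mono) blast
  moreover have "q \<in> B'" unfolding B'_def using assms(7,8) by blast
  ultimately show False using independent_ls_not_in_span_remove[OF B'I] by blast
qed

lemma S_of_eq_singleton_if_exact:
  assumes "axiom_P2 L" "has_dim P L P n" "base_ls P L B" "finite B" "card B = n + 1"
    and "k \<le> n - 1" "finite R" "exact P L k B R" "p \<in> B"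
  shows "S_of P R p = {p}"
proof (rule ccontr)
  assume ne: "S_of P R p \<noteq> {p}"
  define Z where "Z = {x\<in>B. \<forall>S\<in>R. p \<in> S \<longrightarrow> x \<in> S}"
  have BP: "B \<subseteq> P" using assms(3) unfolding base_ls_def independent_ls_def by blast
  have R: "R \<subseteq> base_subset P L k B" using assms(8) unfolding exact_def by blast
  have S_of: "S_of P R p = span_ls P L Z"
    unfolding Z_def by (rule S_of_base_subset[OF assms(3,7) R])
  have "p \<in> Z" unfolding Z_def using assms(9) by blast
  moreover have "Z \<noteq> {p}" using ne S_of span_ls_singleton[of p P L] assms(9) BP by auto
  ultimately obtain q where q: "q \<in> Z" "q \<noteq> p" by blast
  then have qB: "q \<in> B" unfolding Z_def by blast
  have pq: "p \<in> P" "q \<in> P" using BP assms(9) qB by blast+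
  have line: "line_through L p q \<in> L" using line_through_props(1)[OF ls pq q(2)[symmetric]] .
  obtain r where r: "r \<in> line_through L p q" "r \<noteq> p" "r \<noteq> q"
    using axiom_P2_third_point[OF assms(1) line] by blast
  have rP: "r \<in> P" using line_subset_points[OF ls line] r(1) by blast
  have BI: "independent_ls P L B" using assms(3) unfolding base_ls_def by blast
  have B': "base_ls P L (insert r (B - {p}))"
    using base_ls_exchange[OF assms(3,9) rP]
      line_point_not_in_span_remove[OF ls BI assms(9) qB q(2)[symmetric] r(1,3)] by blast
  moreover have "R \<subseteq> base_subset P L k (insert r (B - {p}))"
    using base_subset_replace_on_line[OF ls BI _ assms(9) qB q(2)[symmetric] r(1,3)] R q(1)
    unfolding Z_def by blast
  ultimately have "base_subset P L k (insert r (B - {p})) = base_subset P L k B"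
    using assms(8) unfolding exact_def by blast
  then show False
    using base_subset_replace_on_line_ne[OF assms(2-6,9) qB q(2)[symmetric] r B'] by blast
qed

lemma exact_if_S_of_eq_singleton:
  assumes "base_ls P L B" "finite R" "R \<subseteq> base_subset P L k B"
    and S_of: "\<And>p. p \<in> B \<Longrightarrow> S_of P R p = {p}"
  shows "exact P L k B R"
  unfolding exact_def
proof (intro conjI allI impI)
  fix B' assume B': "base_ls P L B'" and R': "R \<subseteq> base_subset P L k B'"
  have B'I: "independent_ls P L B'" using B' unfolding base_ls_def by blast
  have "B \<subseteq> B'"
  proof
    fix p assume "p \<in> B"
    define Z where "Z = {x\<in>B'. \<forall>S\<in>R. p \<in> S \<longrightarrow> x \<in> S}"
    have "span_ls P L Z = {p}"
      using S_of[OF \<open>p \<in> B\<close>] S_of_base_subset[OF B' assms(2) R'] unfolding Z_def by simp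
    moreover have "Z \<subseteq> P" using B'I unfolding Z_def independent_ls_def by blast
    moreover have "Z \<noteq> {}" using \<open>span_ls P L Z = {p}\<close> span_ls_empty[of P L] by auto
    ultimately have "Z = {p}" using span_ls_superset[of Z P L] by auto
    then show "p \<in> B'" unfolding Z_def by blast
  qed
  moreover have "span_ls P L B = P" using assms(1) unfolding base_ls_def by blast
  ultimately have "B' = B" using independent_ls_eq_if_spanning_subset[OF B'I] by blast
  then show "base_subset P L k B' = base_subset P L k B" by simp
qed fact

end

theorem lemma2p2:
  fixes P :: "'p set" and L :: "'p set set" and n k :: nat and B :: "'p set"
    and R :: "'p set set"
  assumes "linear_space P L"
    and "has_dim P L P n"
    and "exchange_axiom P L"
    and "axiom_P2 L"
    and "0 < k" and "k < n - 1"
    and "base_ls P L B" and "finite B" and "card B = n + 1"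
    and "R \<subseteq> base_subset P L k B"
  shows "exact P L k B R \<longleftrightarrow> (\<forall>p\<in>B. S_of P R p = {p})"
proof -
  have "finite R" using assms(8,10) finite_base_subset finite_subset by blast
  moreover have "k \<le> n - 1" using assms(6) by simp
  ultimately show ?thesis
    using S_of_eq_singleton_if_exact[OF assms(1,3,4,2,7-9)]
      exact_if_S_of_eq_singleton[OF assms(1,3,7) _ assms(10)]
    by blast
qed

end
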